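(* There exist a polynomial $p$ and a constant $c>0$ such that for every integer $k\geq 1$ there exist an approval election $E=(N,C,(A_v)_{v\in N},k)$ with $|N|\le p(k)$ voters, a committee $W_0\subseteq C$ with $|W_0|=k$, and a valid sequence of swaps $(a_1,b_1),\dots,(a_s,b_s)$ starting from $W_0$ with $s\ge c\,k^2$ (i.e., of length $\Omega(k^2)$) such that every swap in the sequence increases the PAV score by at least $\frac{n}{k^2}$, where $n=|N|$; that is, $\Delta(W_{t-1},a_t,b_t)\ge \frac{n}{k^2}$ for all $t\in[s]$.
   Context: An approval election is a tuple $E=(N,C,(A_v)_{v\in N},k)$ where $N=[n]$ is a set of voters, $C$ is a finite set of candidates, $A_v\subseteq C$ is the approval ballot of voter $v$, and $k\in[|C|]$ is the target committee size. A committee is a subset of $C$. The PAV score of a committee $W$ is $\textsc{pavsc}(W)=\sum_{v\in N}\sum_{j=1}^{|A_v\cap W|}\frac{1}{j}$. For $a\in W$, $b\notin W$, let $\Delta(W,a,b)=\textsc{pavsc}((W\setminus\{a\})\cup\{b\})-\textsc{pavsc}(W)$. A sequence of swaps $(a_1,b_1),\dots,(a_s,b_s)$ is valid starting from $W_0$ if, setting $W_t=(W_{t-1}\cup\{b_t\})\setminus\{a_t\}$, we have $a_t\in W_{t-1}$ and $b_t\notin W_{t-1}$ for every $t\in[s]$. *)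

theory Defs
  imports Complex_Main "HOL-Computational_Algebra.Polynomial"
begin

definition approval_election :: "nat \<Rightarrow> 'c set \<Rightarrow> (nat \<Rightarrow> 'c set) \<Rightarrow> nat \<Rightarrow> bool" where
  "approval_election n C A k \<longleftrightarrow>
     finite C \<and> (\<forall>v<n. A v \<subseteq> C) \<and> 1 \<le> k \<and> k \<le> card C"

definition pavsc :: "nat \<Rightarrow> (nat \<Rightarrow> 'c set) \<Rightarrow> 'c set \<Rightarrow> real" where
  "pavsc n A W = (\<Sum>v<n. \<Sum>j=1..card (A v \<inter> W). 1 / real j)"

definition swap_delta :: "nat \<Rightarrow> (nat \<Rightarrow> 'c set) \<Rightarrow> 'c set \<Rightarrow> 'c \<Rightarrow> 'c \<Rightarrow> real" where
  "swap_delta n A W a b = pavsc n A ((W - {a}) \<union> {b}) - pavsc n A W"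

fun committee_seq :: "'c set \<Rightarrow> ('c \<times> 'c) list \<Rightarrow> nat \<Rightarrow> 'c set" where
  "committee_seq W0 sw 0 = W0"
| "committee_seq W0 sw (Suc t) =
     (committee_seq W0 sw t \<union> {snd (sw ! t)}) - {fst (sw ! t)}"

definition valid_swaps :: "'c set \<Rightarrow> ('c \<times> 'c) list \<Rightarrow> bool" where
  "valid_swaps W0 sw \<longleftrightarrow>
     (\<forall>t<length sw. fst (sw ! t) \<in> committee_seq W0 sw t \<and>
                    snd (sw ! t) \<notin> committee_seq W0 sw t)"

end

theory Submission
  imports Defs
begin

(*
  Take k^2 voters in k blocks of k; in block i exactly i + 1 voters approve candidate i + 1
  and nobody else, so candidate x \<le> k has exactly x approvers. As every ballot has at most
  one candidate, the PAV score is additive over the committee and replacing a by a + 1 gains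
  exactly 1 = n / k^2. Put m = \<lceil>k/2\<rceil> tokens on candidates 0, ..., m - 1, pad the committee
  with k - m candidates that are never touched, and move the tokens one at a time, the
  topmost first, m steps upward in unit steps. This yields m^2 \<ge> k^2/4 improving swaps
  among the candidates 0, ..., 2m - 1 \<le> k.
*)

lemma committee_seq_map_eqI:
  assumes "S 0 = W0"
    and "\<And>t. Suc t < L \<Longrightarrow> S (Suc t) = (S t \<union> {snd (f t)}) - {fst (f t)}"
  shows "t < L \<Longrightarrow> committee_seq W0 (map f [0..<L]) t = S t"
  by (induction t) (auto simp: assms)

lemma valid_swaps_mapI:
  assumes "S 0 = W0"
    and "\<And>t. t < L \<Longrightarrow> fst (f t) \<in> S t \<and> snd (f t) \<notin> S t"
    and "\<And>t. Suc t < L \<Longrightarrow> S (Suc t) = (S t \<union> {snd (f t)}) - {fst (f t)}"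
  shows "valid_swaps W0 (map f [0..<L])"
  using committee_seq_map_eqI[of S W0 L f] assms by (auto simp: valid_swaps_def)

lemma harmonic_sum_le_1: "m \<le> 1 \<Longrightarrow> (\<Sum>j=1..m. 1 / real j) = real m"
  by (cases m) auto

lemma pavsc_single_approval:
  assumes "\<And>v. v < n \<Longrightarrow> \<exists>c. A v \<subseteq> {c}"
  shows "pavsc n A W = (\<Sum>v<n. real (card (A v \<inter> W)))"
proof -
  have "card (A v \<inter> W) \<le> 1" if v: "v < n" for v
  proof -
    obtain c where "A v \<inter> W \<subseteq> {c}" using assms[OF v] by blast
    then show ?thesis using card_mono[of "{c}"] by fastforce
  qed
  then show ?thesis
    unfolding pavsc_def by (intro sum.cong refl harmonic_sum_le_1) auto
qed

lemma card_Int_swap: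
  assumes "finite X" "a \<in> W" "b \<notin> W"
  shows "card (X \<inter> (W - {a} \<union> {b})) + of_bool (a \<in> X) = card (X \<inter> W) + of_bool (b \<in> X)"
proof -
  have fin: "finite (X \<inter> W)" using assms(1) by simp
  have "X \<inter> (W - {a} \<union> {b}) = (X \<inter> W - {a}) \<union> (X \<inter> {b})" by auto
  moreover have "card ((X \<inter> W - {a}) \<union> (X \<inter> {b})) = card (X \<inter> W - {a}) + of_bool (b \<in> X)"
    using fin assms(3) by (subst card_Un_disjoint) auto
  moreover have "card (X \<inter> W - {a}) + of_bool (a \<in> X) = card (X \<inter> W)"
  proof (cases "a \<in> X")
    case True
    then have "card (X \<inter> W) = Suc (card (X \<inter> W - {a}))"
      using fin assms(2) by (intro card.remove) simp_all
    then show ?thesis using True by simp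
  qed simp
  ultimately show ?thesis by simp
qed

lemma sum_of_bool_lessThan:
  "(\<Sum>v<(n::nat). of_bool (P v) :: real) = real (card {v \<in> {..<n}. P v})"
  by (subst sum_of_bool_eq) (auto simp: Int_def)

lemma swap_delta_single_approval:
  assumes "\<And>v. v < n \<Longrightarrow> \<exists>c. A v \<subseteq> {c}" and "a \<in> W" "b \<notin> W"
  shows "swap_delta n A W a b
           = real (card {v \<in> {..<n}. b \<in> A v}) - real (card {v \<in> {..<n}. a \<in> A v})"
proof -
  have "swap_delta n A W a b
          = (\<Sum>v<n. real (card (A v \<inter> (W - {a} \<union> {b}))) - real (card (A v \<inter> W)))"
    by (simp only: swap_delta_def pavsc_single_approval[OF assms(1)] sum_subtractf)
  also have "\<dots> = (\<Sum>v<n. of_bool (b \<in> A v) - of_bool (a \<in> A v))"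
  proof (rule sum.cong)
    fix v assume "v \<in> {..<n}"
    then obtain c where "A v \<subseteq> {c}" using assms(1) by blast
    then have "finite (A v)" by (rule finite_subset) simp
    from card_Int_swap[OF this assms(2,3)]
    have "real (card (A v \<inter> (W - {a} \<union> {b}))) + of_bool (a \<in> A v)
            = real (card (A v \<inter> W)) + of_bool (b \<in> A v)"
      by (metis of_nat_add of_nat_of_bool)
    then show "real (card (A v \<inter> (W - {a} \<union> {b}))) - real (card (A v \<inter> W))
                 = of_bool (b \<in> A v) - of_bool (a \<in> A v)"
      by linarith
  qed simp
  also have "\<dots> = real (card {v \<in> {..<n}. b \<in> A v}) - real (card {v \<in> {..<n}. a \<in> A v})"
    by (simp only: sum_subtractf sum_of_bool_lessThan)
  finally show ?thesis .
qed

definition staircase_ballot :: "nat \<Rightarrow> nat \<Rightarrow> nat set" where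
  "staircase_ballot k v = (if v mod k \<le> v div k then {v div k + 1} else {})"

lemma card_staircase_approvers:
  assumes "x \<le> k"
  shows "card {v \<in> {..<k * k}. x \<in> staircase_ballot k v} = x"
proof (cases x)
  case 0
  then show ?thesis by (simp add: staircase_ballot_def)
next
  case (Suc i)
  have "{v \<in> {..<k * k}. x \<in> staircase_ballot k v} = (\<lambda>j. i * k + j) ` {..i}"
  proof (intro equalityI subsetI)
    fix v assume "v \<in> {v \<in> {..<k * k}. x \<in> staircase_ballot k v}"
    then have "v div k = i" "v mod k \<le> i"
      using Suc by (auto simp: staircase_ballot_def split: if_splits)
    then show "v \<in> (\<lambda>j. i * k + j) ` {..i}"
      by (metis atMost_iff div_mult_mod_eq image_eqI)
  next
    fix v assume "v \<in> (\<lambda>j. i * k + j) ` {..i}"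
    then obtain j where j: "j \<le> i" "v = i * k + j" by auto
    have "i < k" using Suc assms by simp
    then have "v div k = i" "v mod k = j" using j by auto
    moreover have "v < k * k"
    proof -
      have "v < Suc i * k" using j \<open>i < k\<close> by simp
      also have "\<dots> \<le> k * k" using Suc assms by (intro mult_le_mono1) simp
      finally show ?thesis .
    qed
    ultimately show "v \<in> {v \<in> {..<k * k}. x \<in> staircase_ballot k v}"
      using j Suc by (simp add: staircase_ballot_def)
  qed
  then show ?thesis using Suc by (simp add: card_image inj_on_def)
qed

lemma swap_delta_staircase:
  assumes "a \<in> W" "a + 1 \<notin> W" "a + 1 \<le> k"
  shows "swap_delta (k * k) (staircase_ballot k) W a (a + 1) = 1"
proof -
  have "\<exists>c. staircase_ballot k v \<subseteq> {c}" for v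
    by (auto simp: staircase_ballot_def)
  then have "swap_delta (k * k) (staircase_ballot k) W a (a + 1)
      = real (card {v \<in> {..<k * k}. a + 1 \<in> staircase_ballot k v})
        - real (card {v \<in> {..<k * k}. a \<in> staircase_ballot k v})"
    using assms(1,2) by (rule swap_delta_single_approval)
  also have "\<dots> = 1"
    using assms(3) card_staircase_approvers[of a k] card_staircase_approvers[of "a + 1" k] by simp
  finally show ?thesis .
qed

lemma less_mult_cases:
  fixes t m q :: nat
  assumes "t < m * q"
  obtains p j where "t = p * q + j" "j < q" "p < m"
proof
  show "t = t div q * q + t mod q" by simp
  show "t mod q < q" using assms by (cases "q = 0") auto
  show "t div q < m" using assms by (simp add: less_mult_imp_div_less)
qed

(* Token p (counted from the top) starts at m - 1 - p and ends at m - 1 - p + q; in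
  climb_state B m q i j the tokens below i are still in place, token i has moved j steps
  and the tokens above i have arrived. *)
definition climb_swap :: "nat \<Rightarrow> nat \<Rightarrow> nat \<Rightarrow> nat \<times> nat" where
  "climb_swap m q t = (let a = m - 1 - t div q + t mod q in (a, a + 1))"

definition climb_state :: "nat set \<Rightarrow> nat \<Rightarrow> nat \<Rightarrow> nat \<Rightarrow> nat \<Rightarrow> nat set" where
  "climb_state B m q i j = B \<union> {..<i} \<union> {i + j} \<union> {i + q<..<m + q}"

lemma climb_swap_eq: "j < q \<Longrightarrow> climb_swap m q (p * q + j) = (m - 1 - p + j, m - 1 - p + Suc j)"
  by (simp add: climb_swap_def Let_def)

lemma climb_state_swap_mem:
  assumes "j < q" "i < m" "B \<inter> {..<m + q} = {}"
  shows "i + j \<in> climb_state B m q i j" "Suc (i + j) \<notin> climb_state B m q i j"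
  using assms unfolding climb_state_def by auto

lemma climb_state_advance:
  assumes "Suc j < q" "i < m" "B \<inter> {..<m + q} = {}"
  shows "climb_state B m q i (Suc j) = climb_state B m q i j \<union> {i + Suc j} - {i + j}"
  using assms unfolding climb_state_def by auto

lemma climb_state_next:
  assumes "Suc j = q" "Suc i < m" "B \<inter> {..<m + q} = {}"
  shows "climb_state B m q i 0 = climb_state B m q (Suc i) j \<union> {Suc i + Suc j} - {Suc i + j}"
  using assms unfolding climb_state_def by auto

lemma valid_climb_swaps:
  assumes "0 < m" and B: "B \<inter> {..<m + q} = {}"
  shows "valid_swaps (B \<union> {..<m}) (map (climb_swap m q) [0..<m * q])"
proof (rule valid_swaps_mapI[where S = "\<lambda>t. climb_state B m q (m - 1 - t div q) (t mod q)"])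
  show "climb_state B m q (m - 1 - 0 div q) (0 mod q) = B \<union> {..<m}"
    using assms(1) by (auto simp: climb_state_def)
next
  fix t assume "t < m * q"
  then obtain p j where t: "t = p * q + j" "j < q" "p < m" by (rule less_mult_cases)
  then show "fst (climb_swap m q t) \<in> climb_state B m q (m - 1 - t div q) (t mod q) \<and>
             snd (climb_swap m q t) \<notin> climb_state B m q (m - 1 - t div q) (t mod q)"
    using climb_state_swap_mem[of j q "m - 1 - p" m B] B by (simp add: climb_swap_eq)
next
  fix t assume "Suc t < m * q"
  then have "t < m * q" by simp
  then obtain p j where t: "t = p * q + j" "j < q" "p < m" by (rule less_mult_cases)
  have swap: "climb_swap m q t = (m - 1 - p + j, m - 1 - p + Suc j)"
    unfolding t(1) using t(2) by (rule climb_swap_eq)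
  have state: "t div q = p" "t mod q = j" using t by simp_all
  show "climb_state B m q (m - 1 - Suc t div q) (Suc t mod q)
        = climb_state B m q (m - 1 - t div q) (t mod q)
          \<union> {snd (climb_swap m q t)} - {fst (climb_swap m q t)}"
  proof (cases "Suc j < q")
    case True
    then have "Suc t div q = p" "Suc t mod q = Suc j"
      using state by (simp_all add: div_Suc mod_Suc)
    then show ?thesis
      unfolding swap state using climb_state_advance[OF True _ B, of "m - 1 - p"] t(3) by simp
  next
    case False
    then have q: "Suc j = q" using t by simp
    then have "Suc t div q = Suc p" "Suc t mod q = 0"
      using state by (simp_all add: div_Suc mod_Suc)
    moreover have "Suc p < m"
      using \<open>Suc t < m * q\<close> \<open>Suc t div q = Suc p\<close> by (metis less_mult_imp_div_less)
    moreover from this have "m - 1 - p = Suc (m - 1 - Suc p)" by simp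
    ultimately show ?thesis
      unfolding swap state using climb_state_next[OF q _ B, of "m - 1 - Suc p"] by simp
  qed
qed

lemma climb_swap_step:
  assumes "t < m * q"
  shows "snd (climb_swap m q t) = fst (climb_swap m q t) + 1" "snd (climb_swap m q t) < m + q"
proof -
  obtain p j where "t = p * q + j" "j < q" "p < m" using assms by (rule less_mult_cases)
  then show "snd (climb_swap m q t) = fst (climb_swap m q t) + 1" "snd (climb_swap m q t) < m + q"
    by (auto simp: climb_swap_eq)
qed

lemma approval_election_staircase:
  assumes "1 \<le> k" "finite C" "{..k} \<subseteq> C"
  shows "approval_election (k * k) C (staircase_ballot k) k"
proof -
  have "staircase_ballot k v \<subseteq> {..k}" if "v < k * k" for v
    using that less_mult_imp_div_less[of v k k] by (auto simp: staircase_ballot_def)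
  moreover have "k \<le> card C"
    using card_mono[OF assms(2,3)] by simp
  ultimately show ?thesis
    using assms unfolding approval_election_def by blast
qed

lemma staircase_climb_election:
  assumes "1 \<le> k"
  obtains C W0 sw where
    "approval_election (k * k) C (staircase_ballot k) k" "W0 \<subseteq> C" "card W0 = k"
    "valid_swaps W0 sw" "k * k \<le> 4 * length sw"
    "\<And>t. t < length sw \<Longrightarrow>
       swap_delta (k * k) (staircase_ballot k) (committee_seq W0 sw t) (fst (sw ! t)) (snd (sw ! t)) = 1"
proof
  define m where "m = (k + 1) div 2"
  have m: "0 < m" "2 * m \<le> k + 1" "k \<le> 2 * m"
    using assms by (auto simp: m_def)
  define W0 where "W0 = {2 * m..<k + m} \<union> {..<m}"
  define sw where "sw = map (climb_swap m m) [0..<m * m]"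
  show "approval_election (k * k) {..<k + m} (staircase_ballot k) k"
    using assms m by (intro approval_election_staircase) auto
  show "W0 \<subseteq> {..<k + m}"
    using m by (auto simp: W0_def)
  show "card W0 = k"
    unfolding W0_def using m by (subst card_Un_disjoint) auto
  show valid: "valid_swaps W0 sw"
    unfolding W0_def sw_def using m by (intro valid_climb_swaps) auto
  have "k * k \<le> (2 * m) * (2 * m)"
    using m by (intro mult_le_mono) auto
  then show "k * k \<le> 4 * length sw"
    by (simp add: sw_def)
  fix t
  assume t: "t < length sw"
  then have "sw ! t = climb_swap m m t" "t < m * m"
    by (simp_all add: sw_def)
  then have "snd (sw ! t) = fst (sw ! t) + 1" "fst (sw ! t) + 1 \<le> k"
    using climb_swap_step[of t m m] m by auto
  moreover have "fst (sw ! t) \<in> committee_seq W0 sw t" "snd (sw ! t) \<notin> committee_seq W0 sw t"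
    using valid t by (simp_all add: valid_swaps_def)
  ultimately show
    "swap_delta (k * k) (staircase_ballot k) (committee_seq W0 sw t) (fst (sw ! t)) (snd (sw ! t)) = 1"
    by (metis swap_delta_staircase)
qed

theorem theorem2:
  "\<exists>(p :: real poly) (c :: real). c > 0 \<and>
     (\<forall>k::nat. k \<ge> 1 \<longrightarrow>
       (\<exists>(n::nat) (C :: nat set) (A :: nat \<Rightarrow> nat set) (W0 :: nat set) (sw :: (nat \<times> nat) list).
          n \<ge> 1 \<and> approval_election n C A k \<and> real n \<le> poly p (real k) \<and>
          W0 \<subseteq> C \<and> card W0 = k \<and>
          valid_swaps W0 sw \<and> real (length sw) \<ge> c * (real k)^2 \<and>
          (\<forall>t<length sw.
             swap_delta n A (committee_seq W0 sw t) (fst (sw ! t)) (snd (sw ! t))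
               \<ge> real n / (real k)^2)))"
proof (intro exI[of _ "[:0, 0, 1:]"] exI[of _ "1 / 4"] conjI allI impI, goal_cases)
  case 1
  show ?case by simp
next
  case (2 k)
  obtain C W0 sw where
    election: "approval_election (k * k) C (staircase_ballot k) k" "W0 \<subseteq> C" "card W0 = k"
      and valid: "valid_swaps W0 sw" and length: "k * k \<le> 4 * length sw"
      and gain: "\<And>t. t < length sw \<Longrightarrow>
        swap_delta (k * k) (staircase_ballot k) (committee_seq W0 sw t) (fst (sw ! t)) (snd (sw ! t)) = 1"
    using staircase_climb_election[OF 2] by blast
  have "1 / 4 * (real k)^2 \<le> real (length sw)"
    using length by (simp add: power2_eq_square flip: of_nat_mult of_nat_le_iff)
  moreover have "real (k * k) / (real k)^2 = 1" "1 \<le> k * k"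
    using 2 by (simp_all add: power2_eq_square)
  ultimately show ?case
    using election valid gain
    by (intro exI[of _ "k * k"] exI[of _ C] exI[of _ "staircase_ballot k"] exI[of _ W0]
        exI[of _ sw]) simp
qed

end
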